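(* Let $1/2<\delta<1$, let $P\subset\mathbb{R}^1$ be a finite point set containing the source $s$ located at $0$, and let $I\subset\mathbb{R}^1$ be an interval of length $\Delta_1$ at distance $\Delta_2$ from the source, that is, $I=[\Delta_2,\Delta_2+\Delta_1]$ or $I=[-\Delta_1-\Delta_2,-\Delta_2]$, for some $\Delta_2>0$. Let $P_{\mathrm{cheap}}(I)$ be the set of all cheap points of $P$ that are in $I$ and whose successor lies in $I$ as well. Then $\sum_{p\in P_{\mathrm{cheap}}(I)}\rho_{\mathrm{st}}(p)^2\le\delta(\Delta_1+\Delta_2)\Delta_1$.
   Context: Points of $P$ left of $s$ are $\ell_1,\ell_2,\dots$ and right of $s$ are $r_1,r_2,\dots$, numbered by increasing distance from $s$. The successor $\mathrm{suc}(p)$ of $r_i$ is $r_{i+1}$ and of $\ell_i$ is $\ell_{i+1}$; $s$ has successors $r_1,\ell_1$; the farthest point on each side (extreme) has no successor ($\mathrm{nil}$). The standard range $\rho_{\mathrm{st}}(p)$ of $p\ne s$ is $|p\,\mathrm{suc}(p)|$, or $0$ if $p$ is extreme. A point $p\ne s$ is expensive if $\mathrm{suc}(p)\ne\mathrm{nil}$ and $|p\,\mathrm{suc}(p)|>\delta\cdot|s\,\mathrm{suc}(p)|$, and cheap otherwise; $s$ is always expensive. *)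

theory Defs
  imports Main "HOL.Real"
begin

text \<open>Points are reals; the source s is located at 0. The successor of a point p \<noteq> 0
  is the next point of P farther away from 0 on the same side (None = nil).
  The source has two successors and is never cheap, so suc is only used for p \<noteq> 0.\<close>

definition suc :: "real set \<Rightarrow> real \<Rightarrow> real option" where
  "suc P p =
    (if p > 0 then (if \<exists>q\<in>P. q > p then Some (Min {q\<in>P. q > p}) else None)
     else if p < 0 then (if \<exists>q\<in>P. q < p then Some (Max {q\<in>P. q < p}) else None)
     else None)"

definition rho_st :: "real set \<Rightarrow> real \<Rightarrow> real" where
  "rho_st P p = (case suc P p of None \<Rightarrow> 0 | Some q \<Rightarrow> \<bar>p - q\<bar>)"

definition expensive :: "real \<Rightarrow> real set \<Rightarrow> real \<Rightarrow> bool" where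
  "expensive \<delta> P p = (p = 0 \<or> (\<exists>q. suc P p = Some q \<and> \<bar>p - q\<bar> > \<delta> * \<bar>0 - q\<bar>))"

definition cheap :: "real \<Rightarrow> real set \<Rightarrow> real \<Rightarrow> bool" where
  "cheap \<delta> P p = (\<not> expensive \<delta> P p)"

definition P_cheap :: "real \<Rightarrow> real set \<Rightarrow> real set \<Rightarrow> real set" where
  "P_cheap \<delta> P I = {p \<in> P. cheap \<delta> P p \<and> p \<in> I \<and> (\<exists>q. suc P p = Some q \<and> q \<in> I)}"

end

theory Submission
  imports Defs
begin

text \<open>Reflecting P at the source reduces the left interval to the right one. There, a cheap p
  with successor q in I has \<open>\<rho>\<^sub>s\<^sub>t(p) = |p q| \<le> \<delta> |q| \<le> \<delta> (\<Delta>1 + \<Delta>2)\<close>, and the segments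
  [p, q] of distinct such points do not overlap and lie in I, so the \<open>\<rho>\<^sub>s\<^sub>t(p)\<close> add up to at most
  \<open>\<Delta>1\<close>. Hence the sum of squares is at most \<open>\<delta> (\<Delta>1 + \<Delta>2) \<Delta>1\<close>.\<close>

lemma sum_gaps_le:
  fixes S :: "'a::linordered_ab_group_add set"
  assumes "finite S" and "a \<le> b"
    and "\<And>p. p \<in> S \<Longrightarrow> a \<le> p \<and> p \<le> f p \<and> f p \<le> b"
    and "\<And>p p'. p \<in> S \<Longrightarrow> p' \<in> S \<Longrightarrow> p < p' \<Longrightarrow> f p \<le> p'"
  shows "(\<Sum>p\<in>S. f p - p) \<le> b - a"
  using assms
proof (induction S arbitrary: b rule: finite_linorder_max_induct)
  case empty
  then show ?case by simp
next
  case (insert m A)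
  have "(\<Sum>p\<in>insert m A. f p - p) = (f m - m) + (\<Sum>p\<in>A. f p - p)"
    using insert.hyps by (subst sum.insert) auto
  also have "\<dots> \<le> (b - m) + (m - a)"
  proof (rule add_mono)
    show "f m - m \<le> b - m" using insert.prems(2) by simp
    show "(\<Sum>p\<in>A. f p - p) \<le> m - a"
      using insert.prems insert.hyps(2) by (intro insert.IH) auto
  qed
  finally show ?case by simp
qed

lemma suc_SomeD_pos:
  assumes "finite P" and "0 < p" and "suc P p = Some q"
  shows "p < q" and "\<And>r. r \<in> P \<Longrightarrow> p < r \<Longrightarrow> q \<le> r"
proof -
  have ne: "{r \<in> P. p < r} \<noteq> {}" and q: "q = Min {r \<in> P. p < r}"
    using assms unfolding suc_def by (auto split: if_splits)
  have fin: "finite {r \<in> P. p < r}" using assms(1) by simp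
  show "p < q" using Min_in[OF fin ne] q by simp
  show "\<And>r. r \<in> P \<Longrightarrow> p < r \<Longrightarrow> q \<le> r" using q fin by simp
qed

lemma suc_uminus_image:
  assumes "finite P"
  shows "suc (uminus ` P) (- p) = map_option uminus (suc P p)"
proof -
  have right: "{q \<in> uminus ` P. q < - p} = uminus ` {q \<in> P. p < q}"
    and left: "{q \<in> uminus ` P. - p < q} = uminus ` {q \<in> P. q < p}" by force+
  have fin: "finite {q \<in> P. p < q}" "finite {q \<in> P. q < p}" using assms by simp_all
  have "Max (uminus ` {q \<in> P. p < q}) = - Min {q \<in> P. p < q}" if "\<exists>q\<in>P. p < q"
    using that by (subst minus_Min_eq_Max[OF fin(1)]) auto
  moreover have "Min (uminus ` {q \<in> P. q < p}) = - Max {q \<in> P. q < p}" if "\<exists>q\<in>P. q < p"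
    using that by (subst minus_Max_eq_Min[OF fin(2)]) auto
  ultimately show ?thesis unfolding suc_def right left by auto
qed

lemma rho_st_uminus_image:
  assumes "finite P"
  shows "rho_st (uminus ` P) (- p) = rho_st P p"
  unfolding rho_st_def suc_uminus_image[OF assms] by (cases "suc P p") auto

lemma P_cheap_uminus_image:
  assumes "finite P"
  shows "P_cheap \<delta> (uminus ` P) (uminus ` I) = uminus ` P_cheap \<delta> P I"
proof (rule set_eqI)
  fix x
  have "cheap \<delta> (uminus ` P) (- p) = cheap \<delta> P p" for p
    unfolding cheap_def expensive_def suc_uminus_image[OF assms] by auto
  then have "- p \<in> P_cheap \<delta> (uminus ` P) (uminus ` I) \<longleftrightarrow> p \<in> P_cheap \<delta> P I" for p
    unfolding P_cheap_def by (auto simp: suc_uminus_image[OF assms])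
  from this[of "- x"] show "x \<in> P_cheap \<delta> (uminus ` P) (uminus ` I) \<longleftrightarrow> x \<in> uminus ` P_cheap \<delta> P I"
    by force
qed

lemma rho_st_le_if_cheap:
  assumes "cheap \<delta> P p" and "p \<noteq> 0" and "suc P p = Some q"
  shows "rho_st P p \<le> \<delta> * \<bar>q\<bar>"
  using assms unfolding cheap_def expensive_def rho_st_def by auto

lemma sum_rho_st_P_cheap_le:
  fixes a b :: real
  assumes "finite P" and "0 < a" and "a \<le> b"
  shows "(\<Sum>p\<in>P_cheap \<delta> P {a..b}. rho_st P p) \<le> b - a"
proof -
  let ?S = "P_cheap \<delta> P {a..b}"
  define nxt where "nxt p = the (suc P p)" for p
  have S: "p \<in> P \<and> a \<le> p \<and> suc P p = Some (nxt p) \<and> nxt p \<le> b" if "p \<in> ?S" for p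
    using that unfolding P_cheap_def nxt_def by auto
  have nxt: "p < nxt p" "\<And>r. r \<in> P \<Longrightarrow> p < r \<Longrightarrow> nxt p \<le> r" if "p \<in> ?S" for p
  proof -
    have "0 < p" "suc P p = Some (nxt p)" using S[OF that] assms(2) by auto
    then show "p < nxt p" "\<And>r. r \<in> P \<Longrightarrow> p < r \<Longrightarrow> nxt p \<le> r"
      using suc_SomeD_pos[OF assms(1)] by blast+
  qed
  have fin: "finite ?S" using assms(1) unfolding P_cheap_def by simp
  have "rho_st P p = nxt p - p" if "p \<in> ?S" for p
    using S[OF that] nxt(1)[OF that] unfolding rho_st_def by simp
  then have "(\<Sum>p\<in>?S. rho_st P p) = (\<Sum>p\<in>?S. nxt p - p)" by simp
  also have "\<dots> \<le> b - a"
  proof (rule sum_gaps_le[OF fin assms(3)])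
    show "a \<le> p \<and> p \<le> nxt p \<and> nxt p \<le> b" if "p \<in> ?S" for p
      using S[OF that] nxt(1)[OF that] by simp
    show "nxt p \<le> p'" if "p \<in> ?S" "p' \<in> ?S" "p < p'" for p p'
      using nxt(2)[OF that(1)] S[OF that(2)] that(3) by blast
  qed
  finally show ?thesis .
qed

lemma rho_st_P_cheap_le:
  fixes a b :: real
  assumes "p \<in> P_cheap \<delta> P {a..b}" and "0 \<le> \<delta>" and "0 < a"
  shows "rho_st P p \<le> \<delta> * b"
proof -
  obtain q where "cheap \<delta> P p" "0 < p" "suc P p = Some q" "0 < q" "q \<le> b"
    using assms(1,3) unfolding P_cheap_def by auto
  then have "rho_st P p \<le> \<delta> * \<bar>q\<bar>" by (intro rho_st_le_if_cheap) auto
  also have "\<dots> \<le> \<delta> * b" using \<open>0 < q\<close> \<open>q \<le> b\<close> assms(2) by (intro mult_left_mono) auto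
  finally show ?thesis .
qed

lemma sum_rho_st_sq_P_cheap_le:
  fixes \<delta> a b :: real
  assumes "finite P" and "0 \<le> \<delta>" and "0 < a" and "a \<le> b"
  shows "(\<Sum>p\<in>P_cheap \<delta> P {a..b}. (rho_st P p)\<^sup>2) \<le> \<delta> * b * (b - a)"
proof -
  let ?S = "P_cheap \<delta> P {a..b}"
  have "(\<Sum>p\<in>?S. (rho_st P p)\<^sup>2) \<le> (\<Sum>p\<in>?S. \<delta> * b * rho_st P p)"
  proof (rule sum_mono)
    fix p assume "p \<in> ?S"
    then have "rho_st P p \<le> \<delta> * b" "0 \<le> rho_st P p"
      using rho_st_P_cheap_le assms(2,3) by (auto simp: rho_st_def split: option.split)
    then show "(rho_st P p)\<^sup>2 \<le> \<delta> * b * rho_st P p"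
      unfolding power2_eq_square by (rule mult_right_mono)
  qed
  also have "\<dots> = \<delta> * b * (\<Sum>p\<in>?S. rho_st P p)" by (simp add: sum_distrib_left)
  also have "\<dots> \<le> \<delta> * b * (b - a)"
    using sum_rho_st_P_cheap_le[OF assms(1,3,4)] assms(2,3,4) by (intro mult_left_mono) auto
  finally show ?thesis .
qed

theorem lemma11:
  fixes \<delta> \<Delta>1 \<Delta>2 :: real and P I :: "real set"
  assumes "1/2 < \<delta>" and "\<delta> < 1"
    and "finite P" and "0 \<in> P"
    and "0 \<le> \<Delta>1" and "0 < \<Delta>2"
    and "I = {\<Delta>2 .. \<Delta>2 + \<Delta>1} \<or> I = {-\<Delta>1 - \<Delta>2 .. -\<Delta>2}"
  shows "(\<Sum>p\<in>P_cheap \<delta> P I. (rho_st P p)\<^sup>2) \<le> \<delta> * (\<Delta>1 + \<Delta>2) * \<Delta>1"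
proof -
  let ?J = "{\<Delta>2 .. \<Delta>2 + \<Delta>1}"
  have bound: "(\<Sum>p\<in>P_cheap \<delta> Q ?J. (rho_st Q p)\<^sup>2) \<le> \<delta> * (\<Delta>1 + \<Delta>2) * \<Delta>1"
    if "finite Q" for Q
    using sum_rho_st_sq_P_cheap_le[OF that, of \<delta> \<Delta>2 "\<Delta>2 + \<Delta>1"] assms(1,5,6)
    by (simp add: add.commute)
  from assms(7) consider "I = ?J" | "I = uminus ` ?J" by auto
  then show ?thesis
  proof cases
    case 1
    then show ?thesis using bound[OF assms(3)] by simp
  next
    case 2
    have fin: "finite (uminus ` P)" using assms(3) by simp
    have "P_cheap \<delta> P I = uminus ` P_cheap \<delta> (uminus ` P) ?J"
      using P_cheap_uminus_image[OF fin, of \<delta> ?J] 2 by (simp add: image_image)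
    then have "(\<Sum>p\<in>P_cheap \<delta> P I. (rho_st P p)\<^sup>2)
        = (\<Sum>p\<in>P_cheap \<delta> (uminus ` P) ?J. (rho_st (uminus ` P) p)\<^sup>2)"
      using rho_st_uminus_image[OF fin] by (simp add: sum.reindex image_image)
    then show ?thesis using bound[OF fin] by simp
  qed
qed

end
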